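(* Let $n\in\mathbb N$ and $c\in(0,1)$. Then, as $x\to+\infty$, $\mathbb P^T_n(x)=o(\log x)$ and $\mathbb P^T_n(x)=\omega(\log^c x)$ (i.e. $\mathbb P^T_n(x)/\log^c x\to+\infty$). In particular $\log\mathbb P^T_n(x)\sim\log\log x$.
   Context: Let $p_n$ denote the $n$-th prime number. Define $p^{(0)}_n=n$ and recursively $p^{(k+1)}_n=p_{p^{(k)}_n}$ for $k\in\mathbb N_0$. Let $\mathbb P^T_n=\{p^{(k)}_n:k\in\mathbb N\}$ and $\mathbb P^T_n(x)=\#\{a\le x: a\in\mathbb P^T_n\}$. $\log$ is the natural logarithm, $\log^c x=(\log x)^c$. *)

theory Defs
  imports Complex_Main "HOL-Library.Infinite_Set" "HOL-Library.Landau_Symbols"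
    "HOL-Computational_Algebra.Primes"
begin

text \<open>The n-th prime, 1-indexed: nth_prime 1 = 2, nth_prime 2 = 3, ...
  (the value at 0 is irrelevant, it is only applied to positive arguments).\<close>
definition nth_prime :: "nat \<Rightarrow> nat" where
  "nth_prime n = enumerate {p::nat. prime p} (n - 1)"

definition iter_prime :: "nat \<Rightarrow> nat \<Rightarrow> nat" where
  "iter_prime k n = (nth_prime ^^ k) n"

definition PT_set :: "nat \<Rightarrow> nat set" where
  "PT_set n = {iter_prime k n | k. k \<ge> 1}"

definition PT_count :: "nat \<Rightarrow> real \<Rightarrow> nat" where
  "PT_count n x = card {a \<in> PT_set n. real a \<le> x}"

end

theory Submission
  imports Defs "HOL-Real_Asymp.Real_Asymp"
begin

text \<open>
  Chebyshev's elementary estimates, read off from the prime factorisation of the central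
  binomial coefficient, give pi(y) = o(y) and pi(y) log y >= (log 2 / 4) y. Since
  pi(p_m) = m, the first says m = o(p_m): the iterated primes eventually grow faster than
  any geometric sequence M^k, so at most log x / log M + O(1) of them lie below x.
  The second gives log p_m <= log m + (log m)^(1-r) for large m, so by concavity of t^r
  the logarithms L_k of the iterated primes satisfy L_(k+1)^r <= L_k^r + 1; hence at least
  (log x)^r - O(1) of them lie below x, for every r < 1. Taking logarithms in
  (log x)^r - O(1) <= P_n(x) <= log x gives log P_n(x) ~ log log x.
\<close>

lemma halving_recurrence_bound:
  fixes f :: "nat \<Rightarrow> real"
  assumes "\<And>y. f y \<le> real y" and "\<And>y. Y \<le> y \<Longrightarrow> f y \<le> f (y div 2) + e * real y"
    and "0 \<le> e"
  shows "f y \<le> real Y + 2 * e * real y"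
proof (induction y rule: less_induct)
  case (less y)
  show ?case
  proof (cases "Y \<le> y \<and> 0 < y")
    case True
    have "2 * real (y div 2) \<le> real y"
      using of_nat_mono[of "2 * (y div 2)" y] by simp
    then have "e * (2 * real (y div 2)) \<le> e * real y"
      using assms(3) by (rule mult_left_mono)
    then have "2 * e * real (y div 2) \<le> e * real y"
      by (simp add: mult_ac)
    moreover have "f (y div 2) \<le> real Y + 2 * e * real (y div 2)"
      using True by (intro less) simp
    moreover have "f y \<le> f (y div 2) + e * real y"
      using assms(2) True by blast
    ultimately show ?thesis
      by linarith
  next
    case False
    then have "y \<le> Y"
      by auto
    moreover have "0 \<le> 2 * e * real y"
      using assms(3) by simp
    ultimately show ?thesis
      using assms(1)[of y] of_nat_mono[of y Y] by linarith
  qed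
qed

lemma geometric_growth:
  fixes a :: "nat \<Rightarrow> real"
  assumes "0 \<le> M" and "\<And>k. k0 \<le> k \<Longrightarrow> M * a k \<le> a (Suc k)" and "k0 \<le> k"
  shows "M ^ (k - k0) * a k0 \<le> a k"
  using assms(3)
proof (induction k rule: dec_induct)
  case base
  then show ?case by simp
next
  case (step k)
  have "M ^ (Suc k - k0) * a k0 = M * (M ^ (k - k0) * a k0)"
    using step.hyps(1) by (simp add: Suc_diff_le)
  also have "\<dots> \<le> M * a k"
    using step.IH assms(1) by (rule mult_left_mono)
  also have "\<dots> \<le> a (Suc k)"
    using assms(2) step.hyps(1) by simp
  finally show ?case .
qed

lemma powr_add_powr_one_minus_le:
  fixes y r :: real
  assumes "0 \<le> y" and "0 \<le> r" and "r \<le> 1"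
  shows "(y + y powr (1 - r)) powr r \<le> y powr r + 1"
proof (cases "y = 0")
  case False
  then have "0 < y"
    using assms(1) by simp
  define t where "t = y powr (- r)"
  have "0 \<le> t"
    by (simp add: t_def)
  have "y + y powr (1 - r) = y * (1 + t)"
    using \<open>0 < y\<close> by (simp add: t_def powr_diff powr_minus divide_inverse algebra_simps)
  then have "(y + y powr (1 - r)) powr r = y powr r * (1 + t) powr r"
    using \<open>0 < y\<close> \<open>0 \<le> t\<close> by (simp add: powr_mult)
  also have "\<dots> \<le> y powr r * (1 + t)"
    using \<open>0 \<le> t\<close> assms(2,3) powr_mono[of r 1 "1 + t"] by (intro mult_left_mono) auto
  also have "\<dots> = y powr r + 1"
    using \<open>0 < y\<close> by (simp add: t_def algebra_simps powr_minus)
  finally show ?thesis .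
qed simp

lemma powr_le_of_sublinear_increments:
  fixes L :: "nat \<Rightarrow> real"
  assumes "0 < r" and "r \<le> 1" and "mono L" and "\<And>k. 0 \<le> L k"
    and "\<And>k. k0 \<le> k \<Longrightarrow> L (Suc k) \<le> L k + L k powr (1 - r)"
  shows "L k powr r \<le> L k0 powr r + real (k - k0)"
proof (cases "k \<le> k0")
  case True
  then show ?thesis
    using assms(1-4) by (simp add: powr_mono2 monoD)
next
  case False
  then have "k0 \<le> k" by simp
  then show ?thesis
  proof (induction k rule: dec_induct)
    case base
    then show ?case by simp
  next
    case (step k)
    have "L (Suc k) powr r \<le> (L k + L k powr (1 - r)) powr r"
      using assms step.hyps(1) by (intro powr_mono2) auto
    also have "\<dots> \<le> L k powr r + 1"
      using assms by (intro powr_add_powr_one_minus_le) auto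
    also have "\<dots> \<le> L k0 powr r + real (Suc k - k0)"
      using step.IH step.hyps(1) by (simp add: Suc_diff_le)
    finally show ?case .
  qed
qed

lemma eventually_ln_ge_of_filterlim_div_powr:
  fixes f g :: "'a \<Rightarrow> real"
  assumes "filterlim g at_top F" and "filterlim (\<lambda>x. f x / g x powr c) at_top F"
  shows "eventually (\<lambda>x. 0 < f x \<and> c * ln (g x) \<le> ln (f x)) F"
  using assms(1)[unfolded filterlim_at_top_dense, rule_format, of 0]
    assms(2)[unfolded filterlim_at_top_dense, rule_format, of 1]
proof eventually_elim
  case (elim x)
  have "0 < g x powr c"
    using elim(1) by simp
  with elim(2) have "g x powr c \<le> f x"
    by (simp add: field_simps)
  with \<open>0 < g x powr c\<close> have "0 < f x"
    by linarith
  with \<open>0 < g x powr c\<close> \<open>g x powr c \<le> f x\<close> have "ln (g x powr c) \<le> ln (f x)"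
    using ln_le_cancel_iff by blast
  with elim(1) \<open>0 < f x\<close> show ?case
    by (simp add: ln_powr)
qed

lemma asymp_equiv_ln_of_powr_bounds:
  fixes f g :: "'a \<Rightarrow> real"
  assumes "filterlim g at_top F"
    and "eventually (\<lambda>x. f x \<le> g x) F"
    and "\<And>c. 0 < c \<Longrightarrow> c < 1 \<Longrightarrow> filterlim (\<lambda>x. f x / g x powr c) at_top F"
  shows "(\<lambda>x. ln (f x)) \<sim>[F] (\<lambda>x. ln (g x))"
proof -
  have g: "eventually (\<lambda>x. 1 < g x) F"
    using assms(1) by (simp add: filterlim_at_top_dense)
  have lower: "eventually (\<lambda>x. 0 < f x \<and> c * ln (g x) \<le> ln (f x)) F"
    if "0 < c" "c < 1" for c
    using assms(1) assms(3)[OF that] by (rule eventually_ln_ge_of_filterlim_div_powr)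
  show ?thesis
  proof (rule asymp_equivI', rule order_tendstoI)
    fix a :: real
    assume "a < 1"
    define c where "c = (max a 0 + 1) / 2"
    have c: "0 < c" "c < 1" "a < c"
      using \<open>a < 1\<close> by (auto simp: c_def)
    from g lower[OF c(1,2)] show "eventually (\<lambda>x. a < ln (f x) / ln (g x)) F"
    proof eventually_elim
      case (elim x)
      then have "c \<le> ln (f x) / ln (g x)"
        by (simp add: field_simps)
      with c show ?case
        by linarith
    qed
  next
    fix a :: real
    assume "1 < a"
    have "eventually (\<lambda>x. 0 < f x \<and> 1 / 2 * ln (g x) \<le> ln (f x)) F"
      by (rule lower) simp_all
    with g assms(2) show "eventually (\<lambda>x. ln (f x) / ln (g x) < a) F"
    proof eventually_elim
      case (elim x)
      then have "ln (f x) \<le> ln (g x)"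
        by simp
      moreover have "0 < ln (g x)"
        using elim(1) by simp
      ultimately have "ln (f x) / ln (g x) \<le> 1"
        by (simp add: pos_divide_le_eq)
      with \<open>1 < a\<close> show ?case
        by linarith
    qed
  qed
qed

section \<open>Legendre's formula and the central binomial coefficient\<close>

lemma card_prime_power_dvd:
  fixes p m N :: nat
  assumes "prime p" and "0 < m" and "m \<le> N"
  shows "card {i \<in> {1..N}. p ^ i dvd m} = multiplicity p m"
proof -
  have "multiplicity p m < p ^ multiplicity p m"
    using prime_gt_1_nat[OF assms(1)] by (intro power_gt_expt) simp
  also have "p ^ multiplicity p m \<le> m"
    using assms(2) by (intro dvd_imp_le multiplicity_dvd)
  finally have "multiplicity p m \<le> N"
    using assms(3) by linarith
  have dvd_iff: "p ^ i dvd m \<longleftrightarrow> i \<le> multiplicity p m" for i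
    using assms(1,2) by (intro power_dvd_iff_le_multiplicity) auto
  have "{i \<in> {1..N}. p ^ i dvd m} = {1..multiplicity p m}"
    unfolding dvd_iff using \<open>multiplicity p m \<le> N\<close> by auto
  then show ?thesis
    by simp
qed

lemma multiplicity_fact_nat:
  fixes p n N :: nat
  assumes "prime p" and "n \<le> N"
  shows "multiplicity p (fact n) = (\<Sum>i\<in>{1..N}. n div p ^ i)"
  using assms(2)
proof (induction n)
  case 0
  then show ?case by simp
next
  case (Suc n)
  have Suc_div: "Suc n div d = (if d dvd Suc n then 1 else 0) + n div d" if "0 < d" for d :: nat
    using that by (simp add: div_Suc mod_eq_0_iff_dvd)
  have "multiplicity p (fact (Suc n) :: nat) = multiplicity p (Suc n * fact n)"
    by (simp only: fact_Suc of_nat_id)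
  also have "\<dots> = multiplicity p (Suc n) + multiplicity p (fact n :: nat)"
    using assms(1) by (intro prime_elem_multiplicity_mult_distrib) auto
  also have "multiplicity p (Suc n) = (\<Sum>i\<in>{1..N}. if p ^ i dvd Suc n then 1 else 0)"
    using card_prime_power_dvd[OF assms(1), of "Suc n" N] Suc.prems
    by (simp add: sum.inter_filter[symmetric])
  also have "multiplicity p (fact n :: nat) = (\<Sum>i\<in>{1..N}. n div p ^ i)"
    using Suc by simp
  finally show ?case
    using prime_gt_0_nat[OF assms(1)] by (simp add: Suc_div sum.distrib)
qed

lemma fact_double_central_binomial: "fact (2 * m) = (2 * m choose m) * (fact m * fact m :: nat)"
  using binomial_fact_lemma[of m "2 * m"] by (simp add: mult_2 algebra_simps)

lemma double_div_eq: "2 * m div d = 2 * (m div d) + 2 * (m mod d) div (d :: nat)"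
  using div_add1_eq[of m m d] by (simp add: mult_2)

lemma multiplicity_central_binomial:
  fixes p m :: nat
  assumes "prime p"
  shows "multiplicity p (2 * m choose m) = (\<Sum>i\<in>{1..2*m}. 2 * (m mod p ^ i) div p ^ i)"
proof -
  have "multiplicity p (fact (2 * m) :: nat) =
      multiplicity p (2 * m choose m) + 2 * multiplicity p (fact m :: nat)"
    using assms by (simp add: fact_double_central_binomial prime_elem_multiplicity_mult_distrib)
  moreover have "multiplicity p (fact (2 * m) :: nat) =
      2 * (\<Sum>i\<in>{1..2*m}. m div p ^ i) + (\<Sum>i\<in>{1..2*m}. 2 * (m mod p ^ i) div p ^ i)"
  proof -
    have "(\<Sum>i\<in>{1..2*m}. 2 * m div p ^ i) =
        (\<Sum>i\<in>{1..2*m}. 2 * (m div p ^ i) + 2 * (m mod p ^ i) div p ^ i)"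
      by (rule sum.cong[OF refl]) (rule double_div_eq)
    then show ?thesis
      by (simp add: multiplicity_fact_nat[OF assms, of "2 * m" "2 * m"] sum.distrib
          sum_distrib_left)
  qed
  moreover have "multiplicity p (fact m :: nat) = (\<Sum>i\<in>{1..2*m}. m div p ^ i)"
    using multiplicity_fact_nat[OF assms, of m "2 * m"] by simp
  ultimately show ?thesis by linarith
qed

lemma card_le_Max:
  fixes S :: "nat set"
  assumes "finite S" and "\<And>i. i \<in> S \<Longrightarrow> 0 < i"
  shows "card S \<le> Max S"
proof -
  have "S \<subseteq> {1..Max S}"
  proof
    fix i
    assume "i \<in> S"
    then show "i \<in> {1..Max S}"
      using assms(2)[OF \<open>i \<in> S\<close>] Max_ge[OF assms(1) \<open>i \<in> S\<close>] by simp
  qed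
  then show ?thesis
    using card_mono[of "{1..Max S}" S] by simp
qed

lemma prime_power_multiplicity_central_binomial_le:
  fixes p m :: nat
  assumes "prime p" and "0 < m"
  shows "p ^ multiplicity p (2 * m choose m) \<le> 2 * m"
proof -
  define S where "S = {i \<in> {1..2*m}. p ^ i \<le> 2 * m}"
  have "multiplicity p (2 * m choose m) \<le> (\<Sum>i\<in>{1..2*m}. if p ^ i \<le> 2 * m then 1 else 0)"
    unfolding multiplicity_central_binomial[OF assms(1)]
  proof (rule sum_mono)
    fix i
    have "0 < p ^ i"
      using prime_gt_0_nat[OF assms(1)] by simp
    then have "2 * (m mod p ^ i) div p ^ i < 2"
      by (intro less_mult_imp_div_less) simp
    then show "2 * (m mod p ^ i) div p ^ i \<le> (if p ^ i \<le> 2 * m then 1 else 0)"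
      by (auto simp: mod_less div_less)
  qed
  also have "\<dots> = card S"
    by (simp add: S_def sum.inter_filter[symmetric])
  finally have "p ^ multiplicity p (2 * m choose m) \<le> p ^ card S"
    using prime_gt_0_nat[OF assms(1)] by (intro power_increasing) auto
  also have "p ^ card S \<le> 2 * m"
  proof (cases "S = {}")
    case False
    then have "Max S \<in> S"
      by (intro Max_in) (simp add: S_def)
    have "p ^ card S \<le> p ^ Max S"
      using card_le_Max[of S] prime_gt_0_nat[OF assms(1)]
      by (intro power_increasing) (auto simp: S_def)
    also have "\<dots> \<le> 2 * m"
      using \<open>Max S \<in> S\<close> by (simp add: S_def)
    finally show ?thesis .
  qed (use assms(2) in simp)
  finally show ?thesis .
qed

lemma prod_primes_dvd:
  fixes a :: nat
  assumes "finite P" and "\<And>p. p \<in> P \<Longrightarrow> prime p" and "\<And>p. p \<in> P \<Longrightarrow> p dvd a"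
  shows "\<Prod>P dvd a"
  using assms
proof (induction P rule: finite_induct)
  case empty
  then show ?case by simp
next
  case (insert p P)
  have "coprime p (\<Prod>P)"
    using insert by (intro prod_coprime_right primes_coprime) auto
  with insert show ?case by (simp add: divides_mult)
qed

section \<open>Chebyshev bounds for the prime counting function\<close>

definition prime_pi :: "nat \<Rightarrow> nat" where
  "prime_pi x = card {p. prime p \<and> p \<le> x}"

lemma finite_primes_le: "finite {p :: nat. prime p \<and> p \<le> x}"
  by (rule finite_subset[of _ "{..x}"]) auto

lemma prime_pi_mono: "x \<le> y \<Longrightarrow> prime_pi x \<le> prime_pi y"
  unfolding prime_pi_def by (intro card_mono finite_primes_le) auto

lemma prime_pi_le: "prime_pi x \<le> x - 1"
proof -
  have "{p. prime p \<and> p \<le> x} \<subseteq> {2..x}"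
    using prime_ge_2_nat by auto
  then have "prime_pi x \<le> card {2..x}"
    unfolding prime_pi_def by (intro card_mono) auto
  then show ?thesis
    by simp
qed

lemma prime_pi_Suc_le: "prime_pi (Suc x) \<le> prime_pi x + 1"
proof -
  have "{p. prime p \<and> p \<le> Suc x} \<subseteq> insert (Suc x) {p. prime p \<and> p \<le> x}"
    by auto
  then have "prime_pi (Suc x) \<le> card (insert (Suc x) {p. prime p \<and> p \<le> x})"
    unfolding prime_pi_def by (intro card_mono) (auto intro: finite_primes_le)
  also have "\<dots> \<le> prime_pi x + 1"
    unfolding prime_pi_def by (simp add: card_insert_if finite_primes_le)
  finally show ?thesis .
qed

lemma central_binomial_le_power_prime_pi:
  assumes "0 < m"
  shows "2 * m choose m \<le> (2 * m) ^ prime_pi (2 * m)"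
proof -
  let ?C = "2 * m choose m"
  have "prime_factors ?C \<subseteq> prime_factors (fact (2 * m) :: nat)"
    by (intro dvd_prime_factors) (auto simp: fact_double_central_binomial)
  then have factors: "prime_factors ?C \<subseteq> {p. prime p \<and> p \<le> 2 * m}"
    by (auto simp: prime_factors_fact)
  have "?C = (\<Prod>p\<in>prime_factors ?C. p ^ multiplicity p ?C)"
    by (rule prime_factorization_nat) simp
  also have "\<dots> \<le> (\<Prod>p\<in>prime_factors ?C. 2 * m)"
    using prime_power_multiplicity_central_binomial_le assms by (intro prod_mono) auto
  also have "\<dots> = (2 * m) ^ card (prime_factors ?C)"
    by simp
  also have "\<dots> \<le> (2 * m) ^ prime_pi (2 * m)"
    unfolding prime_pi_def using assms factors
    by (intro power_increasing card_mono finite_primes_le) auto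
  finally show ?thesis .
qed

lemma prime_pi_lower_bound:
  assumes "2 \<le> x"
  shows "ln 2 / 4 * real x \<le> real (prime_pi x) * ln (real x)"
proof -
  define m where "m = x div 2"
  have m: "0 < m" "2 * m \<le> x" "x \<le> 4 * m"
    using assms by (auto simp: m_def)
  have "real (2 * m) / real m = 2"
    using m(1) by simp
  then have "(2::real) ^ m \<le> real (2 * m choose m)"
    using binomial_ge_n_over_k_pow_k[of m "2 * m", where 'a = real] by simp
  also have "\<dots> \<le> real (2 * m) ^ prime_pi (2 * m)"
    unfolding of_nat_power[symmetric] of_nat_le_iff
    by (rule central_binomial_le_power_prime_pi[OF m(1)])
  finally have "ln ((2::real) ^ m) \<le> ln (real (2 * m) ^ prime_pi (2 * m))"
    using m by (subst ln_le_cancel_iff) auto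
  then have central: "real m * ln 2 \<le> real (prime_pi (2 * m)) * ln (real (2 * m))"
    using m(1) by (simp only: ln_realpow of_nat_0_less_iff zero_less_numeral zero_less_mult_iff)
  have "ln 2 / 4 * real x \<le> ln 2 / 4 * (4 * real m)"
    using of_nat_mono[OF m(3)] by (intro mult_left_mono) auto
  also have "\<dots> = real m * ln 2"
    by (simp add: field_simps)
  also have "\<dots> \<le> real (prime_pi (2 * m)) * ln (real (2 * m))"
    by (rule central)
  also have "\<dots> \<le> real (prime_pi x) * ln (real x)"
    using m prime_pi_mono[OF m(2)] by (intro mult_mono) auto
  finally show ?thesis .
qed

lemma power_card_primes_between_le:
  "m ^ card {p. prime p \<and> m < p \<and> p \<le> 2 * m} \<le> 4 ^ m"
proof -
  let ?C = "2 * m choose m"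
  let ?P = "{p. prime p \<and> m < p \<and> p \<le> 2 * m}"
  have "finite ?P"
    by (rule finite_subset[OF _ finite_primes_le[of "2 * m"]]) auto
  have "p dvd ?C" if "p \<in> ?P" for p
  proof -
    from that have p: "prime p" "m < p" "p \<le> 2 * m" by auto
    then have "p dvd ?C * (fact m * fact m)"
      using prime_dvd_fact_iff[OF p(1), of "2 * m"] by (simp add: fact_double_central_binomial)
    moreover have "\<not> p dvd fact m * fact m"
      using p prime_dvd_fact_iff[OF p(1), of m] prime_dvd_mult_iff[OF p(1)] by auto
    ultimately show ?thesis
      using p(1) prime_dvd_mult_iff by blast
  qed
  then have "\<Prod>?P dvd ?C"
    using \<open>finite ?P\<close> by (intro prod_primes_dvd) auto
  have "m ^ card ?P = (\<Prod>p\<in>?P. m)"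
    by simp
  also have "\<dots> \<le> \<Prod>?P"
    by (intro prod_mono) auto
  also have "\<dots> \<le> ?C"
    using \<open>\<Prod>?P dvd ?C\<close> by (intro dvd_imp_le) auto
  also have "\<dots> \<le> 4 ^ m"
    using binomial_le_pow2[of "2 * m" m] by (simp add: power_mult)
  finally show ?thesis .
qed

lemma prime_pi_double_le:
  assumes "2 \<le> m"
  shows "real (prime_pi (2 * m)) \<le> real (prime_pi m) + real m * ln 4 / ln (real m)"
proof -
  let ?P = "{p. prime p \<and> m < p \<and> p \<le> 2 * m}"
  have "{p. prime p \<and> p \<le> 2 * m} = {p. prime p \<and> p \<le> m} \<union> ?P"
    by auto
  then have "prime_pi (2 * m) = card ({p. prime p \<and> p \<le> m} \<union> ?P)"
    by (simp add: prime_pi_def)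
  also have "\<dots> = prime_pi m + card ?P"
    unfolding prime_pi_def
    by (intro card_Un_disjoint finite_primes_le finite_subset[OF _ finite_primes_le[of "2 * m"]])
      auto
  finally have "prime_pi (2 * m) = prime_pi m + card ?P" .
  moreover have "real (card ?P) \<le> real m * ln 4 / ln (real m)"
  proof -
    have "real (m ^ card ?P) \<le> real (4 ^ m)"
      using power_card_primes_between_le[of m] by (simp only: of_nat_le_iff)
    then have "ln (real m ^ card ?P) \<le> ln ((4::real) ^ m)"
      using assms by (subst ln_le_cancel_iff) auto
    then have "real (card ?P) * ln (real m) \<le> real m * ln 4"
      using assms by (simp add: ln_realpow)
    moreover have "0 < ln (real m)"
      using assms by simp
    ultimately show ?thesis
      by (simp add: field_simps)
  qed
  ultimately show ?thesis
    by simp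
qed

lemma prime_pi_le_prime_pi_half:
  assumes "4 \<le> y"
  shows "real (prime_pi y)
    \<le> real (prime_pi (y div 2)) + real (y div 2) * ln 4 / ln (real (y div 2)) + 1"
proof -
  define m where "m = y div 2"
  have "2 \<le> m" and "y \<le> Suc (2 * m)"
    using assms by (auto simp: m_def)
  have "real (prime_pi y) \<le> real (prime_pi (2 * m)) + 1"
    using prime_pi_mono[OF \<open>y \<le> Suc (2 * m)\<close>] prime_pi_Suc_le[of "2 * m"] by linarith
  also have "\<dots> \<le> real (prime_pi m) + real m * ln 4 / ln (real m) + 1"
    using prime_pi_double_le[OF \<open>2 \<le> m\<close>] by simp
  finally show ?thesis
    by (simp add: m_def)
qed

lemma prime_pi_smallo: "(\<lambda>y. real (prime_pi y)) \<in> o(\<lambda>y. real y)"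
proof (rule landau_o.smallI)
  fix c :: real
  assume "0 < c"
  have "eventually (\<lambda>t::real. t * ln 4 / ln t + 1 \<le> c / 2 * t) at_top"
    using \<open>0 < c\<close> by real_asymp
  then have "eventually (\<lambda>m. real m * ln 4 / ln (real m) + 1 \<le> c / 2 * real m) sequentially"
    by (rule eventually_compose_filterlim[OF _ filterlim_real_sequentially])
  then obtain M where M: "\<And>m. M \<le> m \<Longrightarrow> real m * ln 4 / ln (real m) + 1 \<le> c / 2 * real m"
    by (auto simp: eventually_sequentially)
  define Y where "Y = 2 * M + 4"
  have "real (prime_pi y) \<le> real (prime_pi (y div 2)) + c / 4 * real y" if "Y \<le> y" for y
  proof -
    have "2 * real (y div 2) \<le> real y"
      using of_nat_mono[of "2 * (y div 2)" y] by simp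
    then have "c / 4 * (2 * real (y div 2)) \<le> c / 4 * real y"
      using \<open>0 < c\<close> by (intro mult_left_mono) auto
    moreover have "M \<le> y div 2" and "4 \<le> y"
      using that by (auto simp: Y_def)
    ultimately show ?thesis
      using prime_pi_le_prime_pi_half[OF \<open>4 \<le> y\<close>] M[OF \<open>M \<le> y div 2\<close>] by simp
  qed
  moreover have "real (prime_pi y) \<le> real y" for y
    using prime_pi_le[of y] by simp
  ultimately have bound: "real (prime_pi y) \<le> real Y + 2 * (c / 4) * real y" for y
    using \<open>0 < c\<close> by (intro halving_recurrence_bound) auto
  have "eventually (\<lambda>t::real. real Y \<le> c / 2 * t) at_top"
    using \<open>0 < c\<close> by real_asymp
  then have "eventually (\<lambda>y. real Y \<le> c / 2 * real y) sequentially"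
    by (rule eventually_compose_filterlim[OF _ filterlim_real_sequentially])
  then show "eventually (\<lambda>y. norm (real (prime_pi y)) \<le> c * norm (real y)) sequentially"
  proof eventually_elim
    case (elim y)
    with bound[of y] show ?case
      by simp
  qed
qed

section \<open>The n-th prime\<close>

lemma card_le_enumerate:
  fixes S :: "nat set"
  assumes "infinite S"
  shows "card {s \<in> S. s \<le> enumerate S n} = Suc n"
proof -
  have "{s \<in> S. s \<le> enumerate S n} = enumerate S ` {..n}"
  proof (intro set_eqI iffI)
    fix s
    assume "s \<in> {s \<in> S. s \<le> enumerate S n}"
    then obtain i where "s = enumerate S i" "enumerate S i \<le> enumerate S n"
      using enumerate_Ex[OF assms] by force
    then show "s \<in> enumerate S ` {..n}"
      using assms by auto
  next
    fix s
    assume "s \<in> enumerate S ` {..n}"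
    then show "s \<in> {s \<in> S. s \<le> enumerate S n}"
      using assms enumerate_in_set[OF assms] by auto
  qed
  then show ?thesis
    using inj_enumerate[OF assms] by (simp add: card_image inj_on_subset)
qed

lemma prime_nth_prime: "prime (nth_prime m)"
  unfolding nth_prime_def using enumerate_in_set[OF primes_infinite] by simp

lemma prime_pi_nth_prime: "0 < m \<Longrightarrow> prime_pi (nth_prime m) = m"
  using card_le_enumerate[OF primes_infinite, of "m - 1"]
  by (simp add: prime_pi_def nth_prime_def)

lemma nth_prime_gt: "0 < m \<Longrightarrow> m < nth_prime m"
  using prime_pi_nth_prime[of m] prime_pi_le[of "nth_prime m"] prime_gt_0_nat[OF prime_nth_prime]
  by simp

lemma filterlim_nth_prime: "filterlim nth_prime sequentially sequentially"
proof (rule filterlim_at_top_mono[OF filterlim_ident])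
  show "eventually (\<lambda>m. m \<le> nth_prime m) sequentially"
    using eventually_gt_at_top[of 0] by eventually_elim (simp add: less_imp_le nth_prime_gt)
qed

lemma nth_prime_smallo: "(\<lambda>m. real m) \<in> o(\<lambda>m. real (nth_prime m))"
proof -
  have eq: "eventually (\<lambda>m. real (prime_pi (nth_prime m)) = real m) sequentially"
    using eventually_gt_at_top[of 0] by eventually_elim (simp add: prime_pi_nth_prime)
  have "(\<lambda>m. real (prime_pi (nth_prime m))) \<in> o(\<lambda>m. real (nth_prime m))"
    by (rule landau_o.small.compose[OF prime_pi_smallo filterlim_nth_prime])
  then show ?thesis
    by (simp only: landau_o.small.in_cong[OF eq])
qed

lemma ln_nth_prime_le_ln_ln:
  assumes "0 < m"
  shows "ln (real (nth_prime m)) \<le> ln (real m) + ln (4 / ln 2) + ln (ln (real (nth_prime m)))"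
proof -
  define y where "y = real (nth_prime m)"
  have "2 \<le> y"
    using prime_ge_2_nat[OF prime_nth_prime] by (simp add: y_def)
  have "ln 2 / 4 * y \<le> real m * ln y"
    using prime_pi_lower_bound[of "nth_prime m"] prime_ge_2_nat[OF prime_nth_prime] assms
    by (simp add: y_def prime_pi_nth_prime)
  then have "ln (ln 2 / 4 * y) \<le> ln (real m * ln y)"
    using \<open>2 \<le> y\<close> assms by (subst ln_le_cancel_iff) auto
  then show ?thesis
    using \<open>2 \<le> y\<close> assms by (simp add: y_def ln_mult ln_div)
qed

lemma ln_nth_prime_le:
  assumes "0 < d"
  shows "eventually (\<lambda>m. ln (real (nth_prime m)) \<le> ln (real m) + ln (real m) powr d) sequentially"
proof -
  define A :: real where "A = ln (4 / ln 2)"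
  have "eventually (\<lambda>t. A + ln (2 * ln t + 2 * A) \<le> ln t powr d) at_top"
    using assms unfolding A_def by real_asymp
  then have "eventually (\<lambda>m. A + ln (2 * ln (real m) + 2 * A) \<le> ln (real m) powr d) sequentially"
    by (rule eventually_compose_filterlim[OF _ filterlim_real_sequentially])
  with eventually_gt_at_top[of 0] show ?thesis
  proof eventually_elim
    case (elim m)
    define y where "y = real (nth_prime m)"
    have rec: "ln y \<le> ln (real m) + A + ln (ln y)"
      using ln_nth_prime_le_ln_ln[OF elim(1)] by (simp add: y_def A_def)
    have "0 < ln y"
      using prime_ge_2_nat[OF prime_nth_prime[of m]] by (simp add: y_def)
    have "ln (ln y / 2) \<le> ln y / 2 - 1"
      using \<open>0 < ln y\<close> by (intro ln_le_minus_one) simp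
    then have "ln (ln y) \<le> ln y / 2"
      using \<open>0 < ln y\<close> ln_2_less_1 by (simp add: ln_div)
    with rec \<open>0 < ln y\<close> have "ln (ln y) \<le> ln (2 * ln (real m) + 2 * A)"
      by (subst ln_le_cancel_iff) auto
    with rec elim(2) show ?case
      by (simp add: y_def)
  qed
qed

section \<open>Iterated primes\<close>

lemma iter_prime_Suc: "iter_prime (Suc k) n = nth_prime (iter_prime k n)"
  by (simp add: iter_prime_def)

lemma iter_prime_gt: "0 < n \<Longrightarrow> k < iter_prime k n"
proof (induction k)
  case 0
  then show ?case by (simp add: iter_prime_def)
next
  case (Suc k)
  then show ?case
    using nth_prime_gt[of "iter_prime k n"] by (simp add: iter_prime_Suc)
qed

lemma strict_mono_iter_prime:
  assumes "0 < n"
  shows "strict_mono (\<lambda>k. iter_prime k n)"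
proof (rule strict_mono_Suc_iff[THEN iffD2], intro allI)
  fix k
  show "iter_prime k n < iter_prime (Suc k) n"
    using nth_prime_gt iter_prime_gt[OF assms, of k] by (simp add: iter_prime_Suc)
qed

lemma filterlim_iter_prime:
  assumes "0 < n"
  shows "filterlim (\<lambda>k. iter_prime k n) sequentially sequentially"
proof (rule filterlim_at_top_mono[OF filterlim_ident])
  show "eventually (\<lambda>k. k \<le> iter_prime k n) sequentially"
    using iter_prime_gt[OF assms] by (intro always_eventually allI less_imp_le)
qed

lemma PT_count_ge:
  assumes "0 < n" and "real (iter_prime j n) \<le> x"
  shows "j \<le> PT_count n x"
proof -
  have "iter_prime k n \<in> {a \<in> PT_set n. real a \<le> x}" if "k \<in> {1..j}" for k
  proof -
    have "iter_prime k n \<le> iter_prime j n"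
      using that strict_mono_less_eq[OF strict_mono_iter_prime[OF assms(1)]] by simp
    then show ?thesis
      using that assms(2) by (auto simp: PT_set_def)
  qed
  then have "(\<lambda>k. iter_prime k n) ` {1..j} \<subseteq> {a \<in> PT_set n. real a \<le> x}"
    by blast
  moreover have "finite {a \<in> PT_set n. real a \<le> x}"
    by (rule finite_subset[of _ "{..nat \<lfloor>x\<rfloor>}"]) (auto simp: le_nat_floor)
  ultimately have "card ((\<lambda>k. iter_prime k n) ` {1..j}) \<le> PT_count n x"
    unfolding PT_count_def by (intro card_mono)
  moreover have "inj (\<lambda>k. iter_prime k n)"
    using strict_mono_iter_prime[OF assms(1)] by (rule strict_mono_imp_inj_on)
  ultimately show ?thesis
    by (simp add: card_image inj_on_subset)
qed

lemma PT_count_le: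
  assumes "0 < n" and "x < real (iter_prime (Suc j) n)"
  shows "PT_count n x \<le> j"
proof -
  have "{a \<in> PT_set n. real a \<le> x} \<subseteq> (\<lambda>k. iter_prime k n) ` {1..j}"
  proof
    fix a
    assume "a \<in> {a \<in> PT_set n. real a \<le> x}"
    then obtain k where "1 \<le> k" "a = iter_prime k n" "iter_prime k n < iter_prime (Suc j) n"
      using assms(2) by (force simp: PT_set_def)
    then show "a \<in> (\<lambda>k. iter_prime k n) ` {1..j}"
      using strict_mono_less[OF strict_mono_iter_prime[OF assms(1)]] by auto
  qed
  then have "PT_count n x \<le> card ((\<lambda>k. iter_prime k n) ` {1..j})"
    unfolding PT_count_def by (intro card_mono) auto
  also have "\<dots> \<le> j"
    using card_image_le[of "{1..j}" "\<lambda>k. iter_prime k n"] by simp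
  finally show ?thesis .
qed

lemma iter_prime_PT_count_le:
  assumes "0 < n" and "0 < PT_count n x"
  shows "real (iter_prime (PT_count n x) n) \<le> x"
proof (rule ccontr)
  assume "\<not> real (iter_prime (PT_count n x) n) \<le> x"
  then have "PT_count n x \<le> PT_count n x - 1"
    using assms by (intro PT_count_le) auto
  with assms(2) show False
    by simp
qed

lemma less_iter_prime_Suc_PT_count:
  assumes "0 < n"
  shows "x < real (iter_prime (Suc (PT_count n x)) n)"
  using PT_count_ge[OF assms, of "Suc (PT_count n x)" x] by linarith

lemma PT_count_le_of_geometric_growth:
  assumes "0 < n" and "1 < M" and "1 \<le> x"
    and "\<And>k. k0 \<le> k \<Longrightarrow> M * real (iter_prime k n) \<le> real (iter_prime (Suc k) n)"
  shows "real (PT_count n x) \<le> real k0 + ln x / ln M"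
proof (cases "k0 < PT_count n x")
  case True
  let ?j = "PT_count n x"
  have "1 \<le> real (iter_prime k0 n)"
    using iter_prime_gt[OF assms(1), of k0] by linarith
  then have "M ^ (?j - k0) \<le> M ^ (?j - k0) * real (iter_prime k0 n)"
    using assms(2) by simp
  also have "\<dots> \<le> real (iter_prime ?j n)"
    using assms(2,4) True by (intro geometric_growth) auto
  also have "\<dots> \<le> x"
    using True by (intro iter_prime_PT_count_le assms(1)) simp
  finally have "ln (M ^ (?j - k0)) \<le> ln x"
    using assms(2,3) by (subst ln_le_cancel_iff) auto
  then have "real (?j - k0) * ln M \<le> ln x"
    using assms(2) by (simp add: ln_realpow)
  then show ?thesis
    using True assms(2) by (simp add: field_simps of_nat_diff)
next
  case False
  then have "real (PT_count n x) \<le> real k0"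
    by simp
  moreover have "0 \<le> ln x / ln M"
    using assms(2,3) by simp
  ultimately show ?thesis
    by linarith
qed

lemma PT_count_le_ln:
  assumes "0 < n" and "1 < M"
  obtains C where "\<And>x. 1 \<le> x \<Longrightarrow> real (PT_count n x) \<le> C + ln x / ln M"
proof -
  have "eventually (\<lambda>m. norm (real m) \<le> 1 / M * norm (real (nth_prime m))) sequentially"
    using assms(2) by (intro landau_o.smallD[OF nth_prime_smallo]) simp
  then have "eventually (\<lambda>m. M * real m \<le> real (nth_prime m)) sequentially"
    by eventually_elim (use assms(2) in \<open>simp add: field_simps\<close>)
  then have "eventually (\<lambda>k. M * real (iter_prime k n) \<le> real (iter_prime (Suc k) n)) sequentially"
    using eventually_compose_filterlim[OF _ filterlim_iter_prime[OF assms(1)]]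
    by (simp add: iter_prime_Suc)
  then obtain k0 where "\<And>k. k0 \<le> k \<Longrightarrow> M * real (iter_prime k n) \<le> real (iter_prime (Suc k) n)"
    by (auto simp: eventually_sequentially)
  with assms show ?thesis
    using PT_count_le_of_geometric_growth that by blast
qed

lemma ln_powr_le_PT_count:
  assumes "0 < n" and "0 < r" and "r < 1"
  obtains B where "\<And>x. 1 \<le> x \<Longrightarrow> ln x powr r \<le> B + real (PT_count n x)"
proof -
  define L where "L k = ln (real (iter_prime k n))" for k
  have "eventually (\<lambda>m. ln (real (nth_prime m)) \<le> ln (real m) + ln (real m) powr (1 - r)) sequentially"
    using assms(3) by (intro ln_nth_prime_le) simp
  then have "eventually (\<lambda>k. L (Suc k) \<le> L k + L k powr (1 - r)) sequentially"
    using eventually_compose_filterlim[OF _ filterlim_iter_prime[OF assms(1)]]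
    by (simp add: L_def iter_prime_Suc)
  then obtain k0 where k0: "\<And>k. k0 \<le> k \<Longrightarrow> L (Suc k) \<le> L k + L k powr (1 - r)"
    by (auto simp: eventually_sequentially)
  have pos: "0 < iter_prime k n" for k
    using iter_prime_gt[OF assms(1), of k] by simp
  have "mono L"
    using strict_mono_mono[OF strict_mono_iter_prime[OF assms(1)]] pos
    by (auto simp: L_def mono_def)
  have "0 \<le> L k" for k
    using pos[of k] by (simp add: L_def)
  have "ln x powr r \<le> (L k0 powr r + 1) + real (PT_count n x)" if "1 \<le> x" for x
  proof -
    let ?j = "PT_count n x"
    have "ln x < L (Suc ?j)"
      using less_iter_prime_Suc_PT_count[OF assms(1), of x] that by (simp add: L_def)
    then have "ln x powr r \<le> L (Suc ?j) powr r"
      using that assms(2) by (intro powr_mono2) auto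
    also have "\<dots> \<le> L k0 powr r + real (Suc ?j - k0)"
      using assms(2,3) \<open>mono L\<close> \<open>\<And>k. 0 \<le> L k\<close> k0
      by (intro powr_le_of_sublinear_increments) auto
    also have "\<dots> \<le> (L k0 powr r + 1) + real ?j"
      by simp
    finally show ?thesis .
  qed
  then show ?thesis
    by (rule that)
qed

lemma PT_count_smallo_ln:
  assumes "0 < n"
  shows "(\<lambda>x. real (PT_count n x)) \<in> o(\<lambda>x. ln x)"
proof (rule landau_o.smallI)
  fix c :: real
  assume "0 < c"
  obtain C where C: "\<And>x. 1 \<le> x \<Longrightarrow> real (PT_count n x) \<le> C + ln x / ln (exp (2 / c))"
    using PT_count_le_ln[OF assms, of "exp (2 / c)"] \<open>0 < c\<close> by auto
  have "eventually (\<lambda>x. C + c / 2 * ln x \<le> c * ln x) at_top"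
    using \<open>0 < c\<close> by real_asymp
  with eventually_ge_at_top[of 1]
  show "eventually (\<lambda>x. norm (real (PT_count n x)) \<le> c * norm (ln x)) at_top"
  proof eventually_elim
    case (elim x)
    have "real (PT_count n x) \<le> C + c / 2 * ln x"
      using C[OF elim(1)] by (simp add: mult.commute)
    with elim show ?case
      by simp
  qed
qed

lemma filterlim_PT_count_over_ln_powr:
  assumes "0 < n" and "0 < c" and "c < 1"
  shows "filterlim (\<lambda>x. real (PT_count n x) / ln x powr c) at_top at_top"
proof -
  define r where "r = (1 + c) / 2"
  have r: "0 < r" "r < 1" "c < r"
    using assms by (auto simp: r_def)
  obtain B where B: "\<And>x. 1 \<le> x \<Longrightarrow> ln x powr r \<le> B + real (PT_count n x)"
    using ln_powr_le_PT_count[OF assms(1) r(1,2)] by blast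
  have "filterlim (\<lambda>x. (ln x powr r - B) / ln x powr c) at_top at_top"
    using assms(2) r(3) by real_asymp
  moreover have "eventually (\<lambda>x. (ln x powr r - B) / ln x powr c \<le> real (PT_count n x) / ln x powr c) at_top"
    using eventually_gt_at_top[of 1]
  proof eventually_elim
    case (elim x)
    then show ?case
      using B[of x] by (intro divide_right_mono) auto
  qed
  ultimately show ?thesis
    by (rule filterlim_at_top_mono)
qed

theorem corollary6:
  fixes n :: nat and c :: real
  assumes "n \<ge> 1" and "0 < c" and "c < 1"
  shows "(\<lambda>x. real (PT_count n x)) \<in> o[at_top](\<lambda>x. ln x) \<and>
         filterlim (\<lambda>x. real (PT_count n x) / (ln x powr c)) at_top at_top \<and>
         (\<lambda>x. ln (real (PT_count n x))) \<sim>[at_top] (\<lambda>x. ln (ln x))"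
proof -
  have "0 < n"
    using assms(1) by simp
  have smallo: "(\<lambda>x. real (PT_count n x)) \<in> o(\<lambda>x. ln x)"
    by (rule PT_count_smallo_ln[OF \<open>0 < n\<close>])
  have "(\<lambda>x. ln (real (PT_count n x))) \<sim>[at_top] (\<lambda>x. ln (ln x))"
  proof (rule asymp_equiv_ln_of_powr_bounds)
    show "eventually (\<lambda>x. real (PT_count n x) \<le> ln x) at_top"
      using landau_o.smallD[OF smallo zero_less_one] eventually_ge_at_top[of 1]
      by eventually_elim simp
  qed (use ln_at_top filterlim_PT_count_over_ln_powr \<open>0 < n\<close> in auto)
  with smallo filterlim_PT_count_over_ln_powr[OF \<open>0 < n\<close> assms(2,3)] show ?thesis
    by blast
qed

end
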